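(* Let $n\ge 5$ with $n\equiv 1\pmod 4$, fix $\delta_0>0$, and let $T(a,b)=(n-1)^{n-1}a^n+n^nb^{n-1}$. For positive integers $A,B$ and a squarefree integer $d$, let $R_0(d)$ be the number of pairs $(a,b)\in\mathbb Z^2$ with $A\le |a|\le 2A$, $B\le |b|\le 2B$, $\gcd((n-1)a,nb)=1$ and $T(a,b)=d$. Then there is a constant $C>0$ such that for all sufficiently large $A$ and all $B>A^{1+\delta_0}$, $$\sum_{d\ \text{squarefree}}R_0(d)^2\le C\,AB.$$ *)

theory Defs
  imports Complex_Main "HOL-Computational_Algebra.Squarefree"
begin

definition T_form :: "nat \<Rightarrow> int \<Rightarrow> int \<Rightarrow> int" where
  "T_form n a b = (int n - 1) ^ (n - 1) * a ^ n + int n ^ n * b ^ (n - 1)"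

definition R0 :: "nat \<Rightarrow> nat \<Rightarrow> nat \<Rightarrow> int \<Rightarrow> nat" where
  "R0 n A B d = card {(a :: int, b :: int).
      int A \<le> \<bar>a\<bar> \<and> \<bar>a\<bar> \<le> 2 * int A \<and>
      int B \<le> \<bar>b\<bar> \<and> \<bar>b\<bar> \<le> 2 * int B \<and>
      gcd ((int n - 1) * a) (int n * b) = 1 \<and> T_form n a b = d}"

end

theory Submission
  imports Defs
begin

text \<open>The sum of \<open>R0(d)^2\<close> is at most the number of pairs of points \<open>(a, b), (a', b')\<close> of
  the box with \<open>T(a, b) = T(a', b')\<close>. If \<open>a = a'\<close> then \<open>b' = \<plusminus>b\<close> because \<open>n - 1\<close> is even,
  which gives \<open>O(AB)\<close> pairs. If \<open>a \<noteq> a'\<close> then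
  \<open>n^n (b^(n-1) - b'^(n-1)) = (n-1)^(n-1) (a'^n - a^n) =: M\<close>, where \<open>M \<noteq> 0\<close> because \<open>n\<close> is odd,
  and both \<open>b - b'\<close> and \<open>b + b'\<close> divide \<open>M\<close>. By the divisor bound \<open>\<tau>(M) = O(A^(\<delta>0/2))\<close>,
  each of the \<open>O(A^2)\<close> pairs \<open>(a, a')\<close> contributes \<open>O(A^\<delta>0)\<close> pairs \<open>(b, b')\<close>, and
  \<open>A^(2+\<delta>0) < AB\<close>.\<close>

lemma power_powr_commute:
  fixes x \<epsilon> :: real
  assumes "x \<ge> 0"
  shows "(x ^ e) powr \<epsilon> = (x powr \<epsilon>) ^ e"
proof (cases "x = 0")
  case True
  then show ?thesis by (cases e) auto
next
  case False
  with assms have "x > 0" by simp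
  then show ?thesis
    by (simp add: powr_power powr_realpow[symmetric] powr_powr mult.commute)
qed

lemma card_divisors_prime_power_mult_le:
  fixes p r e :: nat
  assumes p: "prime p" and "r > 0" and "\<not> p dvd r"
  shows "card {d. d dvd p ^ e * r} \<le> (e + 1) * card {d. d dvd r}"
proof -
  have "{d. d dvd p ^ e * r} \<subseteq> (\<lambda>(i, d). p ^ i * d) ` ({0..e} \<times> {d. d dvd r})"
  proof
    fix d assume "d \<in> {d. d dvd p ^ e * r}"
    then have d: "d dvd p ^ e * r" by simp
    moreover have "p ^ e * r \<noteq> 0" using assms by (simp add: prime_gt_0_nat)
    ultimately have "d \<noteq> 0" by (metis dvd_0_left)
    define i where "i = multiplicity p d"
    obtain y where dy: "d = p ^ i * y" and "\<not> p dvd y"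
      using multiplicity_decompose'[of d p] \<open>d \<noteq> 0\<close> prime_gt_1_nat[OF p]
      unfolding i_def by auto
    have "p ^ i dvd p ^ e * r" using d dy by (metis dvd_mult_left)
    moreover have "coprime (p ^ i) r" using \<open>\<not> p dvd r\<close> p by (simp add: prime_imp_coprime)
    ultimately have "p ^ i dvd p ^ e" by (simp add: coprime_dvd_mult_left_iff)
    then have "i \<le> e" using p by (metis power_dvd_imp_le prime_gt_1_nat)
    have "y dvd p ^ e * r" and "coprime y (p ^ e)"
      using d dy \<open>\<not> p dvd y\<close> p
      by (auto simp: prime_imp_coprime coprime_commute dest: dvd_mult_right)
    then have "y dvd r" by (simp add: coprime_dvd_mult_right_iff)
    with \<open>i \<le> e\<close> dy show "d \<in> (\<lambda>(i, d). p ^ i * d) ` ({0..e} \<times> {d. d dvd r})"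
      by (auto intro!: image_eqI[of _ _ "(i, y)"])
  qed
  moreover have "finite ({0..e} \<times> {d. d dvd r})"
    using finite_divisors_nat[OF \<open>r > 0\<close>] by simp
  ultimately have "card {d. d dvd p ^ e * r} \<le> card ({0..e} \<times> {d. d dvd r})"
    by (meson card_image_le card_mono finite_imageI order_trans)
  then show ?thesis by (simp add: card_cartesian_product)
qed

lemma card_divisors_le_prod_powr:
  fixes k :: "nat \<Rightarrow> real" and \<epsilon> :: real
  assumes local: "\<And>p e. prime p \<Longrightarrow> real (e + 1) \<le> k p * (real p powr \<epsilon>) ^ e"
  shows "N > 0 \<Longrightarrow> real (card {d. d dvd N}) \<le> (\<Prod>p\<in>prime_factors N. k p) * real N powr \<epsilon>"
proof (induction N rule: less_induct)
  case (less N)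
  show ?case
  proof (cases "N = 1")
    case True
    have "{d. d dvd (1::nat)} = {1}" by auto
    with True show ?thesis by simp
  next
    case False
    with less.prems obtain p where p: "prime p" "p dvd N"
      using prime_factor_nat by blast
    define e where "e = multiplicity p N"
    obtain r where N: "N = p ^ e * r" and "\<not> p dvd r"
      using multiplicity_decompose'[of N p] less.prems prime_gt_1_nat[OF p(1)]
      unfolding e_def by auto
    have "e > 0" using p less.prems by (simp add: e_def prime_multiplicity_gt_zero_iff)
    have "r > 0" using N less.prems by (cases r) auto
    have "p ^ e > 1" using \<open>e > 0\<close> p by (metis one_less_power prime_gt_1_nat)
    then have "r < N" using N \<open>r > 0\<close> by (metis mult_less_cancel2 nat_mult_1)
    have "prime_factors (p ^ e) = {p}"
      using p \<open>e > 0\<close> by (simp add: prime_factorization_prime_power)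
    then have factors: "prime_factors N = insert p (prime_factors r)"
      using N \<open>r > 0\<close> p by (simp add: prime_factors_product prime_gt_0_nat)
    have "p \<notin> prime_factors r" using \<open>\<not> p dvd r\<close> by auto
    have "real N = real p ^ e * real r" using N by simp
    then have N_powr: "real N powr \<epsilon> = (real p powr \<epsilon>) ^ e * real r powr \<epsilon>"
      by (simp add: powr_mult power_powr_commute)
    have "card {d. d dvd N} \<le> (e + 1) * card {d. d dvd r}"
      using card_divisors_prime_power_mult_le[OF p(1) \<open>r > 0\<close> \<open>\<not> p dvd r\<close>] N by simp
    then have "real (card {d. d dvd N}) \<le> real (e + 1) * real (card {d. d dvd r})"
      by (metis of_nat_le_iff of_nat_mult)
    also have "\<dots> \<le> k p * (real p powr \<epsilon>) ^ e * ((\<Prod>q\<in>prime_factors r. k q) * real r powr \<epsilon>)"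
      using local[OF p(1), of e] less.IH[OF \<open>r < N\<close> \<open>r > 0\<close>]
      by (intro mult_mono) (auto intro: order_trans[rotated])
    also have "\<dots> = (\<Prod>q\<in>prime_factors N. k q) * real N powr \<epsilon>"
      using factors \<open>p \<notin> prime_factors r\<close> N_powr by simp
    finally show ?thesis .
  qed
qed

lemma add_one_le_mult_power:
  fixes x q :: real
  assumes "x > 0" and "1 + x \<le> q"
  shows "real (e + 1) \<le> (1 + 1 / x) * q ^ e"
proof -
  have "real (e + 1) \<le> (1 + 1 / x) * (1 + real e * x)"
    using assms(1) by (simp add: field_simps)
  also have "1 + real e * x \<le> (1 + x) ^ e"
    using assms(1) by (intro Bernoulli_inequality) auto
  also have "\<dots> \<le> q ^ e"
    using assms by (intro power_mono) auto
  finally show ?thesis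
    using assms(1) by (simp add: mult_left_mono)
qed

lemma finite_powr_less:
  fixes \<epsilon> c :: real
  assumes "\<epsilon> > 0"
  shows "finite {p :: nat. real p powr \<epsilon> < c}"
proof (rule finite_subset)
  show "{p :: nat. real p powr \<epsilon> < c} \<subseteq> {..nat \<lfloor>c powr (1 / \<epsilon>)\<rfloor>}"
  proof
    fix p :: nat assume "p \<in> {p. real p powr \<epsilon> < c}"
    then have "real p = (real p powr \<epsilon>) powr (1 / \<epsilon>)" and "real p powr \<epsilon> < c"
      using assms by (simp_all add: powr_powr)
    then have "real p \<le> c powr (1 / \<epsilon>)"
      using assms by (metis less_imp_le powr_ge_zero powr_mono2 zero_le_divide_1_iff)
    then show "p \<in> {..nat \<lfloor>c powr (1 / \<epsilon>)\<rfloor>}" by (simp add: le_nat_floor)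
  qed
qed simp

lemma add_one_le_power_of_two_le:
  fixes q :: real
  assumes "q \<ge> 2"
  shows "real (e + 1) \<le> q ^ e"
proof -
  have "real (e + 1) \<le> (1 + 1) ^ e" using Bernoulli_inequality[of "1::real" e] by simp
  also have "\<dots> \<le> q ^ e" using assms by (intro power_mono) auto
  finally show ?thesis .
qed

lemma card_divisors_le_powr:
  fixes \<epsilon> :: real
  assumes "\<epsilon> > 0"
  obtains C where "C > 0" and "\<And>N. N > 0 \<Longrightarrow> real (card {d. d dvd N}) \<le> C * real N powr \<epsilon>"
proof -
  define x where "x = \<epsilon> * ln 2"
  define K where "K = 1 + 1 / x"
  define S where "S = {p. prime p \<and> real p powr \<epsilon> < 2}"
  define k where "k p = (if p \<in> S then K else 1)" for p
  \<comment> \<open>Only the finitely many primes with \<open>p powr \<epsilon> < 2\<close> need a weight \<open>K > 1\<close> in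
    \<open>e + 1 \<le> k p * (p powr \<epsilon>)^e\<close>.\<close>
  have "x > 0" and "K \<ge> 1" using assms by (simp_all add: x_def K_def)
  have "finite S" unfolding S_def by (rule finite_subset[OF _ finite_powr_less[OF assms, of 2]]) auto
  have local: "real (e + 1) \<le> k p * (real p powr \<epsilon>) ^ e" if "prime p" for p e
  proof (cases "p \<in> S")
    case True
    have "1 + x \<le> exp x" by (rule exp_ge_add_one_self)
    also have "exp x = 2 powr \<epsilon>" by (simp add: x_def powr_def)
    also have "\<dots> \<le> real p powr \<epsilon>"
      using that prime_ge_2_nat[OF that] assms by (intro powr_mono2) auto
    finally show ?thesis
      using True add_one_le_mult_power[OF \<open>x > 0\<close>] by (simp add: k_def K_def)
  next
    case False
    then have "real p powr \<epsilon> \<ge> 2" using that by (simp add: S_def)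
    then show ?thesis using False add_one_le_power_of_two_le by (simp add: k_def)
  qed
  show thesis
  proof
    show "K ^ card S > 0" using \<open>K \<ge> 1\<close> by simp
    fix N :: nat assume "N > 0"
    have "(\<Prod>p\<in>prime_factors N. k p) = (\<Prod>p\<in>prime_factors N \<inter> S. k p)"
      by (rule prod.mono_neutral_right) (auto simp: k_def)
    also have "\<dots> \<le> (\<Prod>p\<in>S. k p)"
      using \<open>finite S\<close> \<open>K \<ge> 1\<close> by (intro prod_mono2) (auto simp: k_def)
    also have "\<dots> = K ^ card S" by (simp add: k_def)
    finally have "(\<Prod>p\<in>prime_factors N. k p) \<le> K ^ card S" .
    then show "real (card {d. d dvd N}) \<le> K ^ card S * real N powr \<epsilon>"
      using card_divisors_le_prod_powr[OF local \<open>N > 0\<close>]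
      by (meson mult_right_mono order_trans powr_ge_zero)
  qed
qed

lemma card_int_divisors_le:
  fixes M :: int
  assumes "M \<noteq> 0"
  shows "card {k. k dvd M} \<le> 2 * card {d. d dvd nat \<bar>M\<bar>}"
proof -
  define D where "D = {d. d dvd nat \<bar>M\<bar>}"
  have "{k. k dvd M} \<subseteq> int ` D \<union> (\<lambda>d. - int d) ` D"
  proof
    fix k assume "k \<in> {k. k dvd M}"
    then have "nat \<bar>k\<bar> \<in> D" by (simp add: D_def nat_dvd_iff)
    moreover have "k = int (nat \<bar>k\<bar>) \<or> k = - int (nat \<bar>k\<bar>)" by auto
    ultimately show "k \<in> int ` D \<union> (\<lambda>d. - int d) ` D" by blast
  qed
  moreover have "finite D"
    unfolding D_def by (rule finite_divisors_nat) (use assms in simp)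
  ultimately have "card {k. k dvd M} \<le> card (int ` D \<union> (\<lambda>d. - int d) ` D)"
    by (intro card_mono) auto
  also have "\<dots> \<le> card (int ` D) + card ((\<lambda>d. - int d) ` D)"
    by (rule card_Un_le)
  also have "\<dots> \<le> 2 * card D"
    by (simp add: card_image inj_on_def)
  finally show ?thesis by (simp add: D_def)
qed

lemma card_divisors_pow_diff_le:
  fixes c :: int and n :: nat and \<delta> :: real
  assumes "c \<noteq> 0" and "n > 0" and "\<delta> > 0"
  obtains C where "C > 0" and
    "\<And>X x y. \<bar>real_of_int x\<bar> \<le> X \<Longrightarrow> \<bar>real_of_int y\<bar> \<le> X \<Longrightarrow> x ^ n \<noteq> y ^ n \<Longrightarrow>
      real (card {k. k dvd c * (x ^ n - y ^ n)}) \<le> C * X powr \<delta>"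
proof -
  obtain C where "C > 0" and C: "\<And>N. N > 0 \<Longrightarrow> real (card {d. d dvd N}) \<le> C * real N powr (\<delta> / n)"
    using card_divisors_le_powr[of "\<delta> / n"] assms by auto
  show thesis
  proof
    show "2 * C * (2 * \<bar>real_of_int c\<bar>) powr (\<delta> / n) > 0"
      using \<open>C > 0\<close> assms(1) by simp
    fix X :: real and x y :: int
    assume x: "\<bar>real_of_int x\<bar> \<le> X" and y: "\<bar>real_of_int y\<bar> \<le> X" and "x ^ n \<noteq> y ^ n"
    define M where "M = c * (x ^ n - y ^ n)"
    have "M \<noteq> 0" using assms(1) \<open>x ^ n \<noteq> y ^ n\<close> by (simp add: M_def)
    have "X > 0" using x y \<open>x ^ n \<noteq> y ^ n\<close> by (cases "x = 0"; cases "y = 0") auto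
    have "\<bar>real_of_int (x ^ n - y ^ n)\<bar> \<le> \<bar>real_of_int x\<bar> ^ n + \<bar>real_of_int y\<bar> ^ n"
      by (simp add: power_abs[symmetric] abs_triangle_ineq4)
    also have "\<dots> \<le> X ^ n + X ^ n" using x y by (intro add_mono power_mono) auto
    finally have M_le: "real (nat \<bar>M\<bar>) \<le> 2 * \<bar>real_of_int c\<bar> * X ^ n"
      by (simp add: M_def abs_mult) (metis abs_ge_zero mult.assoc mult.commute mult_left_mono)
    have "real (card {k. k dvd M}) \<le> 2 * real (card {d. d dvd nat \<bar>M\<bar>})"
      using card_int_divisors_le[OF \<open>M \<noteq> 0\<close>] by linarith
    also have "\<dots> \<le> 2 * (C * real (nat \<bar>M\<bar>) powr (\<delta> / n))"
      using C[of "nat \<bar>M\<bar>"] \<open>M \<noteq> 0\<close> by simp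
    also have "\<dots> \<le> 2 * (C * (2 * \<bar>real_of_int c\<bar> * X ^ n) powr (\<delta> / n))"
      using M_le \<open>C > 0\<close> assms(3) by (simp add: powr_mono2)
    also have "\<dots> = 2 * C * (2 * \<bar>real_of_int c\<bar>) powr (\<delta> / n) * X powr \<delta>"
      using \<open>X > 0\<close> assms(2)
      by (simp add: powr_mult powr_realpow[symmetric] powr_powr)
    finally show "real (card {k. k dvd c * (x ^ n - y ^ n)}) \<le> 2 * C * (2 * \<bar>real_of_int c\<bar>) powr (\<delta> / n) * X powr \<delta>"
      by (simp add: M_def)
  qed
qed

lemma odd_power_eq_imp_eq:
  fixes a b :: "'a :: linordered_idom"
  assumes "odd n" and "a ^ n = b ^ n"
  shows "a = b"
proof -
  have "n > 0" using assms(1) by (cases n) auto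
  have "\<bar>a\<bar> ^ n = \<bar>b\<bar> ^ n" using assms(2) by (simp add: power_abs[symmetric])
  then have "\<bar>a\<bar> = \<bar>b\<bar>" using \<open>n > 0\<close> by (simp add: power_eq_iff_eq_base)
  moreover have "0 \<le> a \<longleftrightarrow> 0 \<le> b" using assms by (metis zero_le_odd_power)
  ultimately show ?thesis by (auto simp: abs_if split: if_splits)
qed

lemma even_power_eq_imp_eq_or_minus:
  fixes a b :: "'a :: linordered_idom"
  assumes "even m" and "m > 0" and "a ^ m = b ^ m"
  shows "b = a \<or> b = - a"
proof -
  have "\<bar>a\<bar> ^ m = \<bar>b\<bar> ^ m" using assms by (simp add: power_even_abs)
  then have "\<bar>a\<bar> = \<bar>b\<bar>" using assms(2) by (simp add: power_eq_iff_eq_base)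
  then show ?thesis by (auto simp: abs_eq_iff)
qed

lemma diff_dvd_power_diff: "(x :: 'a :: comm_ring_1) - y dvd x ^ k - y ^ k"
  by (simp add: power_diff_sumr2)

lemma add_dvd_even_power_diff:
  fixes x y :: "'a :: comm_ring_1"
  assumes "even m"
  shows "x + y dvd x ^ m - y ^ m"
proof -
  obtain k where "m = 2 * k" using assms by blast
  have "x + y dvd x\<^sup>2 - y\<^sup>2" by (rule dvdI[of _ _ "x - y"]) (simp add: power2_eq_square algebra_simps)
  also have "x\<^sup>2 - y\<^sup>2 dvd (x\<^sup>2) ^ k - (y\<^sup>2) ^ k" by (rule diff_dvd_power_diff)
  finally show ?thesis by (simp add: \<open>m = 2 * k\<close> power_mult)
qed

lemma
  fixes M :: int
  assumes "M \<noteq> 0"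
  shows finite_sum_diff_dvd_pairs: "finite {(b, b'). b - b' dvd M \<and> b + b' dvd M}"
    and card_sum_diff_dvd_pairs_le: "card {(b, b'). b - b' dvd M \<and> b + b' dvd M} \<le> card {k. k dvd M} ^ 2"
proof -
  let ?P = "{(b, b'). b - b' dvd M \<and> b + b' dvd M}" and ?D = "{k. k dvd M}"
  let ?g = "\<lambda>(b, b'). (b - b', b + b')"
  have inj: "inj_on ?g ?P" by (rule inj_onI) auto
  have sub: "?g ` ?P \<subseteq> ?D \<times> ?D" by auto
  have fin: "finite (?D \<times> ?D)" using finite_divisors_int[OF assms] by simp
  show "finite ?P" using finite_imageD[OF finite_subset[OF sub fin] inj] .
  have "card ?P \<le> card (?D \<times> ?D)" by (rule card_inj_on_le[OF inj sub fin])
  then show "card ?P \<le> card ?D ^ 2" by (simp add: card_cartesian_product power2_eq_square)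
qed

lemma card_Sigma_le_mult:
  assumes "finite S" and "\<And>s. s \<in> S \<Longrightarrow> finite (E s)" and "\<And>s. s \<in> S \<Longrightarrow> real (card (E s)) \<le> c"
  shows "real (card (Sigma S E)) \<le> real (card S) * c"
proof -
  have "real (card (Sigma S E)) = (\<Sum>s\<in>S. real (card (E s)))"
    using assms(1,2) by (simp add: card_SigmaI)
  also have "\<dots> \<le> real (card S) * c" using assms(3) by (rule sum_bounded_above)
  finally show ?thesis .
qed

lemma sum_card_fibres_squared:
  assumes "finite P"
  shows "(\<Sum>v\<in>f ` P. card {x\<in>P. f x = v} ^ 2) = card {(x, y). x \<in> P \<and> y \<in> P \<and> f x = f y}"
proof -
  have "(\<Sum>v\<in>f ` P. card {x\<in>P. f x = v} ^ 2) = (\<Sum>v\<in>f ` P. \<Sum>x | x \<in> P \<and> f x = v. card {y\<in>P. f y = f x})"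
    by (intro sum.cong refl) (simp add: power2_eq_square)
  also have "\<dots> = (\<Sum>x\<in>P. card {y\<in>P. f y = f x})"
    by (rule sum.image_gen[OF assms, symmetric])
  also have "\<dots> = card (SIGMA x:P. {y\<in>P. f y = f x})"
    using assms by (simp add: card_SigmaI)
  also have "(SIGMA x:P. {y\<in>P. f y = f x}) = {(x, y). x \<in> P \<and> y \<in> P \<and> f x = f y}"
    by auto
  finally show ?thesis .
qed

lemma T_form_eq_iff:
  "T_form n a b = T_form n a' b' \<longleftrightarrow>
    int n ^ n * (b ^ (n - 1) - b' ^ (n - 1)) = (int n - 1) ^ (n - 1) * (a' ^ n - a ^ n)"
  unfolding T_form_def by (auto simp: algebra_simps)

lemma T_form_eq_same_fst:
  assumes "odd n" and "n > 1" and "T_form n a b = T_form n a b'"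
  shows "b' = b \<or> b' = - b"
proof -
  have "b ^ (n - 1) = b' ^ (n - 1)" using assms(2,3) by (simp add: T_form_eq_iff)
  then show ?thesis using assms(1,2) by (intro even_power_eq_imp_eq_or_minus) auto
qed

lemma T_form_eq_imp_dvd:
  assumes "odd n" and "T_form n a b = T_form n a' b'"
  shows "b - b' dvd (int n - 1) ^ (n - 1) * (a' ^ n - a ^ n)"
    and "b + b' dvd (int n - 1) ^ (n - 1) * (a' ^ n - a ^ n)"
proof -
  have pow_dvd: "b ^ (n - 1) - b' ^ (n - 1) dvd (int n - 1) ^ (n - 1) * (a' ^ n - a ^ n)"
    using assms(2) unfolding T_form_eq_iff by (metis dvd_triv_right)
  show "b - b' dvd (int n - 1) ^ (n - 1) * (a' ^ n - a ^ n)"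
    using diff_dvd_power_diff pow_dvd by (rule dvd_trans)
  have "even (n - 1)" using assms(1) by simp
  show "b + b' dvd (int n - 1) ^ (n - 1) * (a' ^ n - a ^ n)"
    using add_dvd_even_power_diff[OF \<open>even (n - 1)\<close>] pow_dvd by (rule dvd_trans)
qed

lemma card_T_collisions_same_fst_le:
  fixes P :: "(int \<times> int) set"
  assumes "finite P" and "odd n" and "n > 1"
  shows "card {(x, y). x \<in> P \<and> y \<in> P \<and> case_prod (T_form n) x = case_prod (T_form n) y \<and> fst x = fst y}
    \<le> 2 * card P"
proof -
  let ?flip = "\<lambda>(a, b). ((a, b), (a, - b))"
  have "{(x, y). x \<in> P \<and> y \<in> P \<and> case_prod (T_form n) x = case_prod (T_form n) y \<and> fst x = fst y}
      \<subseteq> (\<lambda>x. (x, x)) ` P \<union> ?flip ` P"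
    using T_form_eq_same_fst[OF assms(2,3)] by fastforce
  then have "card {(x, y). x \<in> P \<and> y \<in> P \<and> case_prod (T_form n) x = case_prod (T_form n) y \<and> fst x = fst y}
      \<le> card ((\<lambda>x. (x, x)) ` P \<union> ?flip ` P)"
    using assms(1) by (intro card_mono) auto
  also have "\<dots> \<le> card ((\<lambda>x. (x, x)) ` P) + card (?flip ` P)" by (rule card_Un_le)
  also have "\<dots> \<le> card P + card P" by (intro add_mono card_image_le assms(1))
  finally show ?thesis by simp
qed

text \<open>Two colliding points with \<open>a \<noteq> a'\<close> are recovered from \<open>(a, a')\<close> and the pair of
  divisors \<open>(b - b', b + b')\<close> of \<open>M = (n - 1)^(n - 1) (a'^n - a^n) \<noteq> 0\<close>.\<close>
lemma card_T_collisions_diff_fst_le: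
  fixes P :: "(int \<times> int) set" and I :: "int set" and D :: real
  assumes "fst ` P \<subseteq> I" and "finite I" and "odd n"
    and D: "\<And>a a'. a \<in> I \<Longrightarrow> a' \<in> I \<Longrightarrow> a \<noteq> a' \<Longrightarrow>
      real (card {k. k dvd (int n - 1) ^ (n - 1) * (a' ^ n - a ^ n)}) \<le> D"
  shows "real (card {(x, y). x \<in> P \<and> y \<in> P \<and>
      case_prod (T_form n) x = case_prod (T_form n) y \<and> fst x \<noteq> fst y}) \<le> real (card I) ^ 2 * D ^ 2"
proof -
  define M where "M a a' = (int n - 1) ^ (n - 1) * (a' ^ n - a ^ n)" for a a'
  define S where "S = {(a, a'). a \<in> I \<and> a' \<in> I \<and> a \<noteq> a'}"
  define E where "E = (\<lambda>(a, a'). {(b, b'). b - b' dvd M a a' \<and> b + b' dvd M a a'})"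
  have E: "finite (E s) \<and> real (card (E s)) \<le> D ^ 2" if "s \<in> S" for s
  proof -
    obtain a a' where s: "s = (a, a')" "a \<in> I" "a' \<in> I" "a \<noteq> a'"
      using \<open>s \<in> S\<close> by (auto simp: S_def)
    then have "a' ^ n \<noteq> a ^ n" using assms(3) odd_power_eq_imp_eq by blast
    then have "M a a' \<noteq> 0" by (auto simp: M_def)
    have "real (card (E s)) \<le> real (card {k. k dvd M a a'}) ^ 2"
      using card_sum_diff_dvd_pairs_le[OF \<open>M a a' \<noteq> 0\<close>] s(1) unfolding E_def
      by (simp flip: of_nat_power)
    also have "\<dots> \<le> D ^ 2" using D[OF s(2-4)] by (intro power_mono) (auto simp: M_def)
    finally show ?thesis
      using finite_sum_diff_dvd_pairs[OF \<open>M a a' \<noteq> 0\<close>] s(1) by (simp add: E_def)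
  qed
  have "finite S" using assms(2) by (intro finite_subset[of S "I \<times> I"]) (auto simp: S_def)
  have "{(x, y). x \<in> P \<and> y \<in> P \<and> case_prod (T_form n) x = case_prod (T_form n) y \<and> fst x \<noteq> fst y}
      \<subseteq> (\<lambda>((a, a'), (b, b')). ((a, b), (a', b'))) ` Sigma S E"
  proof
    fix z assume "z \<in> {(x, y). x \<in> P \<and> y \<in> P \<and>
      case_prod (T_form n) x = case_prod (T_form n) y \<and> fst x \<noteq> fst y}"
    then obtain a b a' b' where z: "z = ((a, b), (a', b'))" and "(a, b) \<in> P" "(a', b') \<in> P"
      and "T_form n a b = T_form n a' b'" "a \<noteq> a'" by auto
    with assms(1) T_form_eq_imp_dvd[OF assms(3)]
    have "((a, a'), (b, b')) \<in> Sigma S E" by (force simp: S_def E_def M_def)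
    then show "z \<in> (\<lambda>((a, a'), (b, b')). ((a, b), (a', b'))) ` Sigma S E"
      by (rule rev_image_eqI) (simp add: z)
  qed
  then have "card {(x, y). x \<in> P \<and> y \<in> P \<and> case_prod (T_form n) x = case_prod (T_form n) y \<and> fst x \<noteq> fst y}
      \<le> card ((\<lambda>((a, a'), (b, b')). ((a, b), (a', b'))) ` Sigma S E)"
    using \<open>finite S\<close> E by (intro card_mono finite_imageI finite_SigmaI) auto
  also have "\<dots> \<le> card (Sigma S E)"
    using \<open>finite S\<close> E by (intro card_image_le finite_SigmaI) auto
  finally have "real (card {(x, y). x \<in> P \<and> y \<in> P \<and>
      case_prod (T_form n) x = case_prod (T_form n) y \<and> fst x \<noteq> fst y}) \<le> real (card (Sigma S E))"
    by (simp only: of_nat_le_iff)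
  also have "\<dots> \<le> real (card S) * D ^ 2"
    using \<open>finite S\<close> E by (intro card_Sigma_le_mult) auto
  also have "\<dots> \<le> real (card I) ^ 2 * D ^ 2"
  proof -
    have "card S \<le> card (I \<times> I)" using assms(2) by (intro card_mono) (auto simp: S_def)
    then have "real (card S) \<le> real (card I) ^ 2"
      by (simp add: card_cartesian_product power2_eq_square flip: of_nat_mult)
    then show ?thesis by (simp add: mult_right_mono)
  qed
  finally show ?thesis .
qed

definition R0_pairs :: "nat \<Rightarrow> nat \<Rightarrow> nat \<Rightarrow> (int \<times> int) set" where
  "R0_pairs n A B = {(a, b). int A \<le> \<bar>a\<bar> \<and> \<bar>a\<bar> \<le> 2 * int A \<and>
      int B \<le> \<bar>b\<bar> \<and> \<bar>b\<bar> \<le> 2 * int B \<and> gcd ((int n - 1) * a) (int n * b) = 1}"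

lemma R0_eq_card_fibre: "R0 n A B d = card {x \<in> R0_pairs n A B. case_prod (T_form n) x = d}"
  unfolding R0_def R0_pairs_def by (rule arg_cong[where f = card]) auto

lemma R0_pairs_subset: "R0_pairs n A B \<subseteq> {- 2 * int A..2 * int A} \<times> {- 2 * int B..2 * int B}"
  by (auto simp: R0_pairs_def)

lemma finite_R0_pairs: "finite (R0_pairs n A B)"
  by (rule finite_subset[OF R0_pairs_subset]) simp

lemma card_R0_pairs_le: "card (R0_pairs n A B) \<le> (4 * A + 1) * (4 * B + 1)"
proof -
  have "card (R0_pairs n A B) \<le> card ({- 2 * int A..2 * int A} \<times> {- 2 * int B..2 * int B})"
    by (intro card_mono R0_pairs_subset) simp
  then show ?thesis by (simp add: card_cartesian_product nat_add_distrib nat_mult_distrib)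
qed

lemma sum_R0_squared_le:
  fixes D :: real
  assumes "odd n" and "n > 1"
    and D: "\<And>x y. \<bar>real_of_int x\<bar> \<le> 2 * real A \<Longrightarrow> \<bar>real_of_int y\<bar> \<le> 2 * real A \<Longrightarrow>
      x ^ n \<noteq> y ^ n \<Longrightarrow> real (card {k. k dvd (int n - 1) ^ (n - 1) * (x ^ n - y ^ n)}) \<le> D"
  shows "real (\<Sum>d\<in>{d. squarefree d \<and> R0 n A B d \<noteq> 0}. R0 n A B d ^ 2)
    \<le> 2 * (4 * real A + 1) * (4 * real B + 1) + (4 * real A + 1) ^ 2 * D ^ 2"
proof -
  define P where "P = R0_pairs n A B"
  define I where "I = {- 2 * int A..2 * int A}"
  let ?T = "case_prod (T_form n)"
  have "finite P" by (simp add: P_def finite_R0_pairs)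
  have "card {(x, y). x \<in> P \<and> y \<in> P \<and> ?T x = ?T y \<and> fst x = fst y}
      \<le> 2 * ((4 * A + 1) * (4 * B + 1))"
    using card_T_collisions_same_fst_le[OF \<open>finite P\<close> assms(1,2)] card_R0_pairs_le[of n A B]
    by (simp add: P_def)
  then have "real (card {(x, y). x \<in> P \<and> y \<in> P \<and> ?T x = ?T y \<and> fst x = fst y})
      \<le> real (2 * ((4 * A + 1) * (4 * B + 1)))"
    by (simp only: of_nat_le_iff)
  then have same: "real (card {(x, y). x \<in> P \<and> y \<in> P \<and> ?T x = ?T y \<and> fst x = fst y})
      \<le> 2 * (4 * real A + 1) * (4 * real B + 1)"
    by (simp add: algebra_simps)
  have "fst ` P \<subseteq> I" using R0_pairs_subset by (force simp: P_def I_def)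
  then have "real (card {(x, y). x \<in> P \<and> y \<in> P \<and> ?T x = ?T y \<and> fst x \<noteq> fst y})
      \<le> real (card I) ^ 2 * D ^ 2"
  proof (rule card_T_collisions_diff_fst_le[OF _ _ assms(1)])
    fix a a' assume "a \<in> I" and "a' \<in> I" and "a \<noteq> a'"
    then have "real_of_int \<bar>a'\<bar> \<le> real_of_int (2 * int A)" and "real_of_int \<bar>a\<bar> \<le> real_of_int (2 * int A)"
      by (simp_all only: of_int_le_iff) (auto simp: I_def)
    then have "\<bar>real_of_int a'\<bar> \<le> 2 * real A" and "\<bar>real_of_int a\<bar> \<le> 2 * real A"
      by simp_all
    moreover have "a' ^ n \<noteq> a ^ n" using \<open>a \<noteq> a'\<close> odd_power_eq_imp_eq[OF assms(1)] by metis
    ultimately show "real (card {k. k dvd (int n - 1) ^ (n - 1) * (a' ^ n - a ^ n)}) \<le> D"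
      by (rule D)
  qed (simp add: I_def)
  then have diff: "real (card {(x, y). x \<in> P \<and> y \<in> P \<and> ?T x = ?T y \<and> fst x \<noteq> fst y})
      \<le> (4 * real A + 1) ^ 2 * D ^ 2"
    by (simp add: I_def nat_add_distrib add.commute)
  have "{d. squarefree d \<and> R0 n A B d \<noteq> 0} \<subseteq> ?T ` P"
    by (auto simp: R0_eq_card_fibre P_def dest: card_gt_0_iff[THEN iffD1])
  then have "(\<Sum>d\<in>{d. squarefree d \<and> R0 n A B d \<noteq> 0}. R0 n A B d ^ 2)
      \<le> (\<Sum>v\<in>?T ` P. R0 n A B v ^ 2)"
    using \<open>finite P\<close> by (intro sum_mono2) auto
  also have "\<dots> = (\<Sum>v\<in>?T ` P. card {x\<in>P. ?T x = v} ^ 2)"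
    by (simp only: R0_eq_card_fibre P_def)
  also have "\<dots> = card {(x, y). x \<in> P \<and> y \<in> P \<and> ?T x = ?T y}"
    by (rule sum_card_fibres_squared[OF \<open>finite P\<close>])
  also have "\<dots> \<le> card {(x, y). x \<in> P \<and> y \<in> P \<and> ?T x = ?T y \<and> fst x = fst y}
      + card {(x, y). x \<in> P \<and> y \<in> P \<and> ?T x = ?T y \<and> fst x \<noteq> fst y}"
    by (rule order_trans[OF eq_imp_le card_Un_le]) (rule arg_cong[where f = card], auto)
  finally show ?thesis using same diff by linarith
qed

lemma quadratic_box_bound_le:
  fixes A B K \<delta> :: real
  assumes "A \<ge> 1" and "B \<ge> 1" and "K \<ge> 0" and "A powr (1 + \<delta>) < B"
  shows "2 * (4 * A + 1) * (4 * B + 1) + (4 * A + 1) ^ 2 * (K * A powr \<delta>) \<le> (50 + 25 * K) * A * B"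
proof -
  have "2 * (4 * A + 1) * (4 * B + 1) \<le> 2 * (5 * A) * (5 * B)"
    using assms by (intro mult_mono) auto
  moreover have "(4 * A + 1) ^ 2 * (K * A powr \<delta>) \<le> (5 * A) ^ 2 * (K * A powr \<delta>)"
    using assms by (intro mult_right_mono power_mono) auto
  moreover have "(5 * A) ^ 2 * (K * A powr \<delta>) = 25 * K * A * A powr (1 + \<delta>)"
    using assms(1) by (simp add: powr_add power2_eq_square)
  moreover have "25 * K * A * A powr (1 + \<delta>) \<le> 25 * K * A * B"
    using assms by (intro mult_left_mono) auto
  ultimately have "2 * (4 * A + 1) * (4 * B + 1) + (4 * A + 1) ^ 2 * (K * A powr \<delta>)
      \<le> 2 * (5 * A) * (5 * B) + 25 * K * A * B"
    by linarith
  then show ?thesis by (simp add: algebra_simps)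
qed

theorem lemma5:
  fixes n :: nat and \<delta>0 :: real
  assumes "n \<ge> 5" and "n mod 4 = 1" and "\<delta>0 > 0"
  shows "\<exists>C > 0. \<exists>A0. \<forall>A B :: nat. A \<ge> A0 \<longrightarrow> A > 0 \<longrightarrow> B > 0 \<longrightarrow>
           real B > real A powr (1 + \<delta>0) \<longrightarrow>
           real (\<Sum>d\<in>{d :: int. squarefree d \<and> R0 n A B d \<noteq> 0}. (R0 n A B d)^2)
             \<le> C * real A * real B"
proof -
  have "odd n" and "n > 1" using assms(1,2) by presburger+
  have "(int n - 1) ^ (n - 1) \<noteq> 0" and "n > 0" and "\<delta>0 / 2 > 0" using assms by auto
  then obtain C where C: "\<And>X x y. \<bar>real_of_int x\<bar> \<le> X \<Longrightarrow> \<bar>real_of_int y\<bar> \<le> X \<Longrightarrow> x ^ n \<noteq> y ^ n \<Longrightarrow>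
      real (card {k. k dvd (int n - 1) ^ (n - 1) * (x ^ n - y ^ n)}) \<le> C * X powr (\<delta>0 / 2)"
    by (rule card_divisors_pow_diff_le) blast
  define K where "K = C ^ 2 * 2 powr \<delta>0"
  have "real (\<Sum>d\<in>{d. squarefree d \<and> R0 n A B d \<noteq> 0}. R0 n A B d ^ 2) \<le> (50 + 25 * K) * real A * real B"
    if "A > 0" and "B > 0" and "real B > real A powr (1 + \<delta>0)" for A B :: nat
  proof -
    have "real (\<Sum>d\<in>{d. squarefree d \<and> R0 n A B d \<noteq> 0}. R0 n A B d ^ 2)
        \<le> 2 * (4 * real A + 1) * (4 * real B + 1) + (4 * real A + 1) ^ 2 * (C * (2 * real A) powr (\<delta>0 / 2)) ^ 2"
      by (rule sum_R0_squared_le[OF \<open>odd n\<close> \<open>n > 1\<close> C])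
    also have "(C * (2 * real A) powr (\<delta>0 / 2)) ^ 2 = K * real A powr \<delta>0"
      using \<open>A > 0\<close> by (simp add: K_def power_mult_distrib powr_mult powr_power)
    also have "2 * (4 * real A + 1) * (4 * real B + 1) + (4 * real A + 1) ^ 2 * (K * real A powr \<delta>0)
        \<le> (50 + 25 * K) * real A * real B"
      using that by (intro quadratic_box_bound_le) (auto simp: K_def)
    finally show ?thesis .
  qed
  moreover have "50 + 25 * K > 0" by (simp add: K_def add_pos_nonneg)
  ultimately show ?thesis by blast
qed

end
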